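(* Let $v$ be a positive integer all of whose maximal prime power factors (i.e. the prime powers $p^e$ with $p^e\mid v$, $p^{e+1}\nmid v$) are congruent to $1$ modulo $4$. Then there exists a $(3v,3,4,1)$-BRDF.
   Context: Let $G$ be a finite group written additively, $H$ a subgroup, and $k\ge2,\lambda\ge1$ integers. A $(G,H,k,\lambda)$-relative difference family (RDF) is a collection of $k$-subsets of $G$ (base blocks) such that the multiset of differences $x-y$ ($x\ne y$ in a common base block) contains every element of $G\setminus H$ exactly $\lambda$ times and no element of $H$. A $(G,H,k,\lambda)$-Banff relative difference family (BRDF) is a $(G,H,k,\lambda)$-RDF such that additionally (2) all base blocks are disjoint from $H$, and (3) the base blocks and their negatives $-B=\{-b:b\in B\}$ are pairwise disjoint. A $(g,h,k,\lambda)$-BRDF means a $(G,H,k,\lambda)$-BRDF for some group $G$ of order $g$ and subgroup $H$ of order $h$. *)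

theory Defs
  imports "HOL-Algebra.Algebra" "HOL-Computational_Algebra.Primes"
begin

text \<open>Groups are HOL-Algebra groups; the paper's additive difference x - y is
  written x \<otimes> inv y. Base blocks form a list (a finite collection).\<close>

definition diff_count :: "('a, 'b) monoid_scheme \<Rightarrow> 'a set list \<Rightarrow> 'a \<Rightarrow> nat" where
  "diff_count G Bs d =
     (\<Sum>B\<leftarrow>Bs. card {(x, y). x \<in> B \<and> y \<in> B \<and> x \<noteq> y \<and> x \<otimes>\<^bsub>G\<^esub> inv\<^bsub>G\<^esub> y = d})"

definition is_RDF :: "('a, 'b) monoid_scheme \<Rightarrow> 'a set \<Rightarrow> nat \<Rightarrow> nat \<Rightarrow> 'a set list \<Rightarrow> bool" where
  "is_RDF G H k lam Bs \<longleftrightarrow>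
     (\<forall>B\<in>set Bs. B \<subseteq> carrier G \<and> finite B \<and> card B = k) \<and>
     (\<forall>d\<in>carrier G - H. diff_count G Bs d = lam) \<and>
     (\<forall>d\<in>H. diff_count G Bs d = 0)"

definition neg_block :: "('a, 'b) monoid_scheme \<Rightarrow> 'a set \<Rightarrow> 'a set" where
  "neg_block G B = (\<lambda>b. inv\<^bsub>G\<^esub> b) ` B"

definition is_BRDF :: "('a, 'b) monoid_scheme \<Rightarrow> 'a set \<Rightarrow> nat \<Rightarrow> nat \<Rightarrow> 'a set list \<Rightarrow> bool" where
  "is_BRDF G H k lam Bs \<longleftrightarrow>
     is_RDF G H k lam Bs \<and>
     (\<forall>B\<in>set Bs. B \<inter> H = {}) \<and>
     (let L = Bs @ map (neg_block G) Bs in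
        \<forall>i<length L. \<forall>j<length L. i \<noteq> j \<longrightarrow> L ! i \<inter> L ! j = {})"

text \<open>A (g,h,k,\<lambda>)-BRDF exists: some finite group of order g (carrier realised
  inside nat, which is no loss since every finite group is isomorphic to one) with a
  subgroup of order h carrying a BRDF.\<close>
definition exists_BRDF :: "nat \<Rightarrow> nat \<Rightarrow> nat \<Rightarrow> nat \<Rightarrow> bool" where
  "exists_BRDF g h k lam \<longleftrightarrow>
     (\<exists>(G :: nat monoid) H Bs. group G \<and> finite (carrier G) \<and> card (carrier G) = g \<and>
        subgroup H G \<and> card H = h \<and> is_BRDF G H k lam Bs)"

end

(*
  Write v = w^2 r with w, r odd and -1 a square modulo r, say j^2 = -1 (mod r): a prime power
  p^e = 1 (mod 4) either has even e and goes into w^2, or has p = 1 (mod 4) and goes into r,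
  where square roots of -1 modulo coprime factors combine by the Chinese remainder theorem.

  On A = Z_w[i] x Z_r multiplication by i, (x, y, z) -> (-y, x, j z), squares to -1, and as |A|
  is odd it splits A - 0 into orbits {s, i s, -s, -i s} of size 4. In G = Z_3 x A with
  H = Z_3 x 0 take one base block {(1, s), (2, i s), (1, -s), (2, -i s)} per orbit. Its 12
  differences include (0, 2u), (1, (i - 1) u) and (2, (i - 1) u) for every u in the orbit of s;
  since 2 and i - 1 are invertible on A, every element of G - H is a difference, and since there
  are 12 |orbits| = |G - H| differences in total, each occurs exactly once. The negative of a
  block has level-1 part {i s, -i s} instead of {s, -s}, so blocks and negatives are disjoint.
*)
theory Submission
  imports Defs "HOL-Number_Theory.Number_Theory" "HOL-Library.Countable"
    "HOL-Library.Product_Plus" "HOL-Library.Product_Lexorder"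
begin

section \<open>Decomposing v as w^2 r with -1 a square modulo r\<close>

lemma QuadRes_minus_one_prime:
  fixes p :: nat
  assumes "Factorial_Ring.prime p" and "p mod 4 = 1"
  shows "QuadRes (int p) (-1)"
proof (rule ccontr)
  assume not_QR: "\<not> QuadRes (int p) (-1)"
  have "p \<ge> 5"
    using prime_ge_2_nat[OF assms(1)] assms(2) by presburger
  have "even ((p - 1) div 2)"
    using assms(2) by presburger
  then have "[Legendre (-1) (int p) = 1] (mod int p)"
    using euler_criterion[of p "-1"] assms(1) \<open>p \<ge> 5\<close> by simp
  moreover have "\<not> [-1 = 0] (mod int p)"
    using \<open>p \<ge> 5\<close> by (simp add: cong_iff_dvd_diff)
  then have "Legendre (-1) (int p) = -1"
    using not_QR by (simp add: Legendre_def)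
  ultimately have "int p dvd 2"
    by (simp add: cong_iff_dvd_diff)
  then show False
    using \<open>p \<ge> 5\<close> by (auto dest: zdvd_imp_le)
qed

lemma QuadRes_minus_one_mult:
  fixes m n :: int
  assumes "coprime m n" and "QuadRes m (-1)" and "QuadRes n (-1)"
  shows "QuadRes (m * n) (-1)"
proof -
  obtain x y where x: "[x\<^sup>2 = -1] (mod m)" and y: "[y\<^sup>2 = -1] (mod n)"
    using assms(2,3) by (auto simp: QuadRes_def)
  obtain z where "[z = x] (mod m)" and "[z = y] (mod n)"
    using binary_chinese_remainder_int[OF assms(1)] by blast
  then have "[z\<^sup>2 = -1] (mod m)" and "[z\<^sup>2 = -1] (mod n)"
    using x y by (meson cong_pow cong_trans)+
  then show ?thesis
    unfolding QuadRes_def using coprime_cong_mult[OF _ _ assms(1)] by blast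
qed

lemma mod_4_eq_1_if_odd_power:
  fixes p e :: nat
  assumes "p ^ e mod 4 = 1" and "odd e"
  shows "p mod 4 = 1"
proof -
  obtain k where e: "e = Suc (2 * k)"
    using \<open>odd e\<close> oddE by fastforce
  have "odd (p ^ e)"
    using assms(1) by presburger
  then have "odd p"
    using e by simp
  then have "p mod 4 = 1 \<or> p mod 4 = 3"
    by presburger
  moreover have "(3::nat) ^ e mod 4 = 3"
  proof -
    have "(3::nat) ^ e mod 4 = 3 * (9 ^ k mod 4) mod 4"
      by (simp add: e power_mult mod_mult_right_eq)
    also have "(9::nat) ^ k mod 4 = 1"
      using power_mod[of "9::nat" 4 k] by simp
    finally show ?thesis
      by simp
  qed
  ultimately show ?thesis
    using assms(1) power_mod[of p 4 e] by auto
qed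

lemma square_times_QuadRes_mult_prime_power:
  fixes p e w r :: nat
  assumes p: "Factorial_Ring.prime p" "p ^ e mod 4 = 1" "\<not> p dvd r"
    and wr: "odd w" "odd r" "QuadRes (int r) (-1)"
  shows "\<exists>w' r'. p ^ e * (w\<^sup>2 * r) = w'\<^sup>2 * r' \<and> odd w' \<and> odd r' \<and> QuadRes (int r') (-1)"
proof -
  have "odd (p ^ e)"
    using p(2) by presburger
  consider k where "e = 2 * k" | k where "e = Suc (2 * k)"
    by (metis evenE oddE Suc_eq_plus1)
  then show ?thesis
  proof cases
    case (1 k)
    have "p ^ e * (w\<^sup>2 * r) = (p ^ k * w)\<^sup>2 * r"
      by (simp add: 1 power_even_eq power_mult_distrib)
    moreover have "odd (p ^ k * w)"
      using \<open>odd (p ^ e)\<close> wr(1) by (simp add: 1 even_power)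
    ultimately show ?thesis
      using wr by blast
  next
    case (2 k)
    have "p mod 4 = 1"
      using mod_4_eq_1_if_odd_power[OF p(2)] 2 by simp
    have "p ^ e * (w\<^sup>2 * r) = (p ^ k * w)\<^sup>2 * (p * r)"
      by (simp add: 2 power_even_eq power_mult_distrib)
    moreover have "odd p"
      using \<open>odd (p ^ e)\<close> by (simp add: 2 even_power)
    moreover have "QuadRes (int (p * r)) (-1)"
      using QuadRes_minus_one_mult QuadRes_minus_one_prime \<open>p mod 4 = 1\<close> p wr(3)
      by (simp add: prime_imp_coprime)
    ultimately show ?thesis
      using wr by (metis even_mult_iff even_power)
  qed
qed

lemma prod_prime_powers_square_times_QuadRes:
  fixes P :: "nat set" and e :: "nat \<Rightarrow> nat"
  assumes "finite P" and "\<forall>p\<in>P. Factorial_Ring.prime p \<and> p ^ e p mod 4 = 1"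
  shows "\<exists>w r. (\<Prod>p\<in>P. p ^ e p) = w\<^sup>2 * r \<and> odd w \<and> odd r \<and> QuadRes (int r) (-1)"
  using assms
proof (induction P rule: finite_induct)
  case empty
  show ?case
    by (rule exI[of _ 1], rule exI[of _ 1]) (simp add: QuadRes_def)
next
  case (insert p P)
  have p: "Factorial_Ring.prime p" "p ^ e p mod 4 = 1"
    using insert.prems by simp_all
  have "\<forall>q\<in>P. Factorial_Ring.prime q \<and> q ^ e q mod 4 = 1"
    using insert.prems by simp
  then obtain w r where wr: "(\<Prod>q\<in>P. q ^ e q) = w\<^sup>2 * r" "odd w" "odd r" "QuadRes (int r) (-1)"
    using insert.IH by blast
  have "\<not> p dvd r"
  proof
    assume "p dvd r"
    then have "p dvd (\<Prod>q\<in>P. q ^ e q)"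
      using wr(1) by simp
    then obtain q where "q \<in> P" "p dvd q ^ e q"
      using prime_dvd_prod_iff[OF insert.hyps(1) p(1), of "\<lambda>q. q ^ e q"] by blast
    then have "p = q"
      using prime_dvd_power[OF p(1)] primes_dvd_imp_eq[OF p(1)] insert.prems by auto
    then show False
      using \<open>q \<in> P\<close> insert.hyps(2) by simp
  qed
  then have "\<exists>w' r'. p ^ e p * (w\<^sup>2 * r) = w'\<^sup>2 * r' \<and> odd w' \<and> odd r' \<and> QuadRes (int r') (-1)"
    using square_times_QuadRes_mult_prime_power[OF p] wr(2-4) by blast
  moreover have "(\<Prod>q\<in>insert p P. q ^ e q) = p ^ e p * (w\<^sup>2 * r)"
    using insert.hyps wr(1) by simp
  ultimately show ?case
    by simp
qed

lemma square_times_QuadRes_decomposition: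
  fixes v :: nat
  assumes "v > 0"
    and "\<forall>p. Factorial_Ring.prime p \<and> p dvd v \<longrightarrow> p ^ Factorial_Ring.multiplicity p v mod 4 = 1"
  obtains w r where "v = w\<^sup>2 * r" "odd w" "odd r" "QuadRes (int r) (-1)"
proof -
  have "v = (\<Prod>p\<in>prime_factors v. p ^ multiplicity p v)"
    using prod_prime_factors[of v] assms(1) by simp
  moreover have "\<forall>p\<in>prime_factors v. Factorial_Ring.prime p \<and> p ^ multiplicity p v mod 4 = 1"
    using assms(2) by (auto simp: in_prime_factors_iff)
  ultimately show ?thesis
    using prod_prime_powers_square_times_QuadRes[of "prime_factors v" "\<lambda>p. multiplicity p v"] that
    by (metis finite_set_mset)
qed

section \<open>Difference pairs of a block\<close>

definition diff_pairs :: "('a, 'b) monoid_scheme \<Rightarrow> 'a set \<Rightarrow> 'a \<Rightarrow> ('a \<times> 'a) set" where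
  "diff_pairs G B d = {(x, y). x \<in> B \<and> y \<in> B \<and> x \<noteq> y \<and> x \<otimes>\<^bsub>G\<^esub> inv\<^bsub>G\<^esub> y = d}"

lemma finite_diff_pairs: "finite B \<Longrightarrow> finite (diff_pairs G B d)"
  by (rule finite_subset[of _ "B \<times> B"]) (auto simp: diff_pairs_def)

lemma diff_count_eq_sum_card_diff_pairs: "diff_count G Bs d = (\<Sum>B\<leftarrow>Bs. card (diff_pairs G B d))"
  by (simp add: diff_count_def diff_pairs_def)

lemma card_off_diagonal:
  assumes "finite B"
  shows "card {(x, y). x \<in> B \<and> y \<in> B \<and> x \<noteq> y} = card B * (card B - 1)"
proof -
  have "{(x, y). x \<in> B \<and> y \<in> B \<and> x \<noteq> y} = B \<times> B - Id_on B"
    by auto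
  moreover have "Id_on B = (\<lambda>x. (x, x)) ` B"
    by auto
  then have "card (Id_on B) = card B"
    by (simp add: card_image inj_on_def)
  ultimately show ?thesis
    using assms by (simp add: card_Diff_subset card_cartesian_product Id_on_subset_Times
        diff_mult_distrib2 finite_subset[OF Id_on_subset_Times])
qed

lemma (in group) sum_card_diff_pairs:
  assumes "finite (carrier G)" and "B \<subseteq> carrier G"
  shows "(\<Sum>d\<in>carrier G. card (diff_pairs G B d)) = card B * (card B - 1)"
proof -
  have "finite B"
    using assms finite_subset by blast
  then have "finite (diff_pairs G B d)" for d
    by (rule finite_diff_pairs)
  then have "(\<Sum>d\<in>carrier G. card (diff_pairs G B d)) = card (\<Union>d\<in>carrier G. diff_pairs G B d)"
    using assms by (intro card_UN_disjoint[symmetric]) (auto simp: diff_pairs_def intro!: m_closed inv_closed)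
  also have "(\<Union>d\<in>carrier G. diff_pairs G B d) = {(x, y). x \<in> B \<and> y \<in> B \<and> x \<noteq> y}"
    using assms(2) by (auto simp: diff_pairs_def) (meson inv_closed m_closed subsetD)
  finally show ?thesis
    using card_off_diagonal[OF \<open>finite B\<close>] by simp
qed

lemma (in group) neg_block_neg_block:
  assumes "B \<subseteq> carrier G"
  shows "neg_block G (neg_block G B) = B"
proof -
  have "(\<lambda>b. inv (inv b)) ` B = id ` B"
    using assms by (intro image_cong) auto
  then show ?thesis
    by (simp add: neg_block_def image_image)
qed

lemma (in comm_group) diff_pairs_neg_blockI:
  assumes "(x, y) \<in> diff_pairs G B d" and "B \<subseteq> carrier G"
  shows "(inv y, inv x) \<in> diff_pairs G (neg_block G B) d"
proof -
  have xy: "x \<in> carrier G" "y \<in> carrier G" "x \<noteq> y" "x \<otimes> inv y = d"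
    using assms by (auto simp: diff_pairs_def)
  then have "inv y \<otimes> inv (inv x) = d"
    by (simp add: m_comm)
  moreover have "inv y \<noteq> inv x"
    using xy by (metis inv_inv)
  ultimately show ?thesis
    using assms(1) by (auto simp: diff_pairs_def neg_block_def)
qed

lemma all_eq_1_if_sum_eq_card:
  fixes f :: "'a \<Rightarrow> nat"
  assumes "finite A" and "\<forall>x\<in>A. f x \<ge> 1" and "sum f A = card A" and "x \<in> A"
  shows "f x = 1"
proof (rule ccontr)
  assume "f x \<noteq> 1"
  then have "1 < f x"
    using assms(2,4) by force
  then have "(\<Sum>x\<in>A. 1) < sum f A"
    using assms(1,2,4) by (intro sum_strict_mono_ex1) auto
  then show False
    using assms(3) by simp
qed

lemma map_nth_disjoint:
  assumes "distinct zs" and "\<And>p q. p \<in> set zs \<Longrightarrow> q \<in> set zs \<Longrightarrow> p \<noteq> q \<Longrightarrow> F p \<inter> F q = {}"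
    and "i < length zs" "j < length zs" "i \<noteq> j"
  shows "map F zs ! i \<inter> map F zs ! j = {}"
  using assms by (simp add: nth_eq_iff_index_eq)

section \<open>Invariance under group isomorphisms\<close>

lemma diff_pairs_iso:
  assumes "group G" "group G'" "h \<in> iso G G'" "B \<subseteq> carrier G" "d \<in> carrier G"
  shows "diff_pairs G' (h ` B) (h d) = map_prod h h ` diff_pairs G B d"
proof -
  have inj: "inj_on h (carrier G)"
    using assms(3) by (simp add: iso_iff)
  interpret group_hom G G' h
    using assms(1-3) by (simp add: group_hom_def group_hom_axioms_def iso_iff)
  have "h x \<otimes>\<^bsub>G'\<^esub> inv\<^bsub>G'\<^esub> h y = h d \<longleftrightarrow> x \<otimes>\<^bsub>G\<^esub> inv\<^bsub>G\<^esub> y = d"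
    if "x \<in> carrier G" "y \<in> carrier G" for x y
    using that assms(5) inj by (simp flip: hom_inv hom_mult add: inj_on_eq_iff)
  then show ?thesis
    using assms(4) inj_on_subset[OF inj assms(4)]
    by (auto simp: diff_pairs_def inj_on_eq_iff subset_iff image_iff)
qed

lemma diff_count_iso:
  assumes "group G" "group G'" "h \<in> iso G G'"
    and "\<forall>B\<in>set Bs. B \<subseteq> carrier G" and "d \<in> carrier G"
  shows "diff_count G' (map ((`) h) Bs) (h d) = diff_count G Bs d"
proof -
  have "card (diff_pairs G' (h ` B) (h d)) = card (diff_pairs G B d)" if "B \<subseteq> carrier G" for B
  proof -
    have "inj_on h B"
      using assms(3) that by (auto simp: iso_iff intro: inj_on_subset)
    then have "inj_on (map_prod h h) (B \<times> B)"
      using map_prod_inj_on by blast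
    moreover have "diff_pairs G B d \<subseteq> B \<times> B"
      by (auto simp: diff_pairs_def)
    ultimately have "inj_on (map_prod h h) (diff_pairs G B d)"
      by (rule inj_on_subset)
    then show ?thesis
      using diff_pairs_iso[OF assms(1-3) that assms(5)] by (simp add: card_image)
  qed
  then show ?thesis
    using assms(4) by (simp add: diff_count_eq_sum_card_diff_pairs comp_def cong: map_cong)
qed

lemma neg_block_iso:
  assumes "group G" "group G'" "h \<in> hom G G'" "B \<subseteq> carrier G"
  shows "neg_block G' (h ` B) = h ` neg_block G B"
proof -
  interpret group_hom G G' h
    using assms(1-3) by (simp add: group_hom_def group_hom_axioms_def)
  show ?thesis
    unfolding neg_block_def image_image using assms(4) by (intro image_cong) auto
qed

lemma is_RDF_iso:
  assumes "group G" "group G'" "h \<in> iso G G'" "H \<subseteq> carrier G"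
    and "is_RDF G H k lam Bs"
  shows "is_RDF G' (h ` H) k lam (map ((`) h) Bs)"
proof -
  have inj: "inj_on h (carrier G)" and onto: "h ` carrier G = carrier G'"
    using assms(3) by (simp_all add: iso_iff)
  have B: "\<forall>B\<in>set Bs. B \<subseteq> carrier G \<and> finite B \<and> card B = k"
    using assms(5) by (simp add: is_RDF_def)
  have "h ` B \<subseteq> carrier G' \<and> finite (h ` B) \<and> card (h ` B) = k" if "B \<in> set Bs" for B
    using B that onto image_mono[of B "carrier G" h] card_image[OF inj_on_subset[OF inj]] by auto
  moreover have "diff_count G' (map ((`) h) Bs) d = lam" if "d \<in> carrier G' - h ` H" for d
  proof -
    have "d \<in> h ` carrier G"
      using that onto by simp
    then obtain d0 where d0: "d0 \<in> carrier G" "d = h d0"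
      by (rule imageE)
    then have "d0 \<notin> H"
      using that by auto
    then show ?thesis
      using d0 assms(5) diff_count_iso[OF assms(1-3)] B by (simp add: is_RDF_def)
  qed
  moreover have "diff_count G' (map ((`) h) Bs) d = 0" if "d \<in> h ` H" for d
    using that assms(4,5) diff_count_iso[OF assms(1-3)] B by (auto simp: is_RDF_def)
  ultimately show ?thesis
    by (simp add: is_RDF_def)
qed

lemma is_BRDF_iso:
  assumes "group G" "group G'" "h \<in> iso G G'" "H \<subseteq> carrier G"
    and "is_BRDF G H k lam Bs"
  shows "is_BRDF G' (h ` H) k lam (map ((`) h) Bs)"
proof -
  have inj: "inj_on h (carrier G)" and hom: "h \<in> hom G G'"
    using assms(3) by (simp_all add: iso_iff)
  have B: "\<forall>B\<in>set Bs. B \<subseteq> carrier G \<and> B \<inter> H = {}"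
    using assms(5) by (simp add: is_BRDF_def is_RDF_def)
  have image_disjoint: "h ` S \<inter> h ` T = {}" if "S \<subseteq> carrier G" "T \<subseteq> carrier G" "S \<inter> T = {}" for S T
    using inj_on_image_Int[OF inj that(1,2)] that(3) by simp
  define L where "L = Bs @ map (neg_block G) Bs"
  have L_sub: "S \<subseteq> carrier G" if "S \<in> set L" for S
    using that B group.inv_closed[OF assms(1)] by (auto simp: L_def neg_block_def)
  have "map ((`) h) Bs @ map (neg_block G') (map ((`) h) Bs) = map ((`) h) L"
    using B neg_block_iso[OF assms(1,2) hom] by (simp add: L_def)
  moreover have "h ` (L ! i) \<inter> h ` (L ! j) = {}" if "i < length L" "j < length L" "i \<noteq> j" for i j
  proof -
    have "L ! i \<inter> L ! j = {}"
      using assms(5) that by (simp add: is_BRDF_def Let_def L_def)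
    then show ?thesis
      using image_disjoint[OF L_sub[OF nth_mem[OF that(1)]] L_sub[OF nth_mem[OF that(2)]]] by simp
  qed
  moreover have "is_RDF G' (h ` H) k lam (map ((`) h) Bs)"
    using is_RDF_iso[OF assms(1-4)] assms(5) by (simp add: is_BRDF_def)
  moreover have "h ` B \<inter> h ` H = {}" if "B \<in> set Bs" for B
    using B that assms(4) image_disjoint by simp
  ultimately show ?thesis
    by (simp add: is_BRDF_def Let_def)
qed

lemma group_iso_nat:
  fixes G :: "('a::countable) monoid"
  assumes "group G"
  obtains G' :: "nat monoid" where "group G'" "to_nat \<in> iso G G'"
proof
  define G' :: "nat monoid" where
    "G' = \<lparr>carrier = to_nat ` carrier G,
      monoid.mult = \<lambda>a b. to_nat (from_nat a \<otimes>\<^bsub>G\<^esub> from_nat b), one = to_nat \<one>\<^bsub>G\<^esub>\<rparr>"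
  have hom: "to_nat \<in> hom G G'"
    by (simp add: hom_def G'_def)
  have "G'\<lparr>carrier := to_nat ` carrier G, one := to_nat \<one>\<^bsub>G\<^esub>\<rparr> = G'"
    by (simp add: G'_def)
  then show "group G'"
    using group.hom_imp_img_group[OF assms hom] by simp
  show "to_nat \<in> iso G G'"
    using hom by (simp add: iso_iff G'_def inj_on_def)
qed

lemma exists_BRDF_if_is_BRDF:
  fixes G :: "('a::countable) monoid"
  assumes "group G" "finite (carrier G)" "subgroup H G" "is_BRDF G H k lam Bs"
  shows "exists_BRDF (card (carrier G)) (card H) k lam"
proof -
  obtain G' :: "nat monoid" where G': "group G'" "to_nat \<in> iso G G'"
    using group_iso_nat[OF assms(1)] .
  have carrier: "carrier G' = to_nat ` carrier G"
    using G'(2) by (simp add: iso_iff)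
  have "group_hom G G' to_nat"
    using G' assms(1) by (simp add: group_hom_def group_hom_axioms_def iso_iff)
  then have "subgroup (to_nat ` H) G'"
    using assms(3) by (rule group_hom.subgroup_img_is_subgroup)
  moreover have "card (to_nat ` A) = card A" for A :: "'a set"
    by (simp add: card_image inj_on_def)
  moreover have "is_BRDF G' (to_nat ` H) k lam (map ((`) to_nat) Bs)"
    using is_BRDF_iso[OF assms(1) G' subgroup.subset[OF assms(3)] assms(4)] .
  ultimately show ?thesis
    unfolding exists_BRDF_def using G'(1) carrier assms(2) by (metis finite_imageI)
qed

section \<open>The construction in Z_3 x Z_w[i] x Z_r\<close>

lemma odd_dvd_double_imp_dvd:
  fixes m x :: int
  assumes "odd m" and "m dvd 2 * x"
  shows "m dvd x"
  using assms by (simp add: coprime_dvd_mult_right_iff)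

locale brdf_construction =
  fixes w r j :: int
  assumes w_pos: "w > 0" and r_pos: "r > 0" and odd_w: "odd w" and odd_r: "odd r"
    and j_square: "[j\<^sup>2 = -1] (mod r)"
begin

fun redA :: "int \<times> int \<times> int \<Rightarrow> int \<times> int \<times> int" where
  "redA (x, y, z) = (x mod w, y mod w, z mod r)"

fun rot :: "int \<times> int \<times> int \<Rightarrow> int \<times> int \<times> int" where
  "rot (x, y, z) = (- y, x, j * z)"

lemma rot_add [simp]: "rot (u + v) = rot u + rot v"
  by (cases u; cases v) (simp add: algebra_simps)

lemma rot_minus [simp]: "rot (- u) = - rot u"
  by (cases u) simp

lemma rot_diff [simp]: "rot (u - v) = rot u - rot v"
  by (cases u; cases v) (simp add: algebra_simps)

lemma rot_zero [simp]: "rot 0 = 0"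
  by (simp add: zero_prod_def)

lemma redA_zero [simp]: "redA 0 = 0"
  by (simp add: zero_prod_def)

lemma redA_redA [simp]: "redA (redA u) = redA u"
  by (cases u) simp

lemma redA_add_redA [simp]:
  "redA (redA u + v) = redA (u + v)" "redA (u + redA v) = redA (u + v)"
  by (cases u; cases v; simp add: mod_add_left_eq mod_add_right_eq)+

lemma redA_diff_redA [simp]:
  "redA (redA u - v) = redA (u - v)" "redA (u - redA v) = redA (u - v)"
  by (cases u; cases v; simp add: mod_diff_left_eq mod_diff_right_eq)+

lemma redA_minus_redA [simp]: "redA (- redA u) = redA (- u)"
  by (cases u) (simp add: mod_minus_eq)

lemma redA_rot_redA [simp]: "redA (rot (redA u)) = redA (rot u)"
  by (cases u) (simp add: mod_minus_eq mod_mult_right_eq)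

lemma redA_minus_rot_redA [simp]: "redA (- rot (redA u)) = redA (- rot u)"
  by (metis redA_minus_redA redA_rot_redA)

lemma redA_eq_0_iff: "redA (x, y, z) = 0 \<longleftrightarrow> w dvd x \<and> w dvd y \<and> r dvd z"
  by (simp add: zero_prod_def dvd_eq_mod_eq_0)

lemma redA_eq_iff: "redA u = redA v \<longleftrightarrow> redA (u - v) = 0"
  by (cases u; cases v) (simp add: zero_prod_def mod_eq_dvd_iff flip: dvd_eq_mod_eq_0)

lemma redA_minus_eq_0_iff [simp]: "redA (- u) = 0 \<longleftrightarrow> redA u = 0"
  by (cases u) (simp add: redA_eq_0_iff del: redA.simps)

lemma redA_rot_rot: "redA (rot (rot u)) = redA (- u)"
proof (cases u)
  case (fields x y z)
  have "r dvd (j * j + 1) * z"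
    using j_square by (simp add: cong_iff_dvd_diff power2_eq_square)
  then have "(j * (j * z)) mod r = (- z) mod r"
    by (simp add: mod_eq_dvd_iff algebra_simps)
  then show ?thesis
    using fields by simp
qed

lemma redA_minus_rot_rot: "redA (- rot (rot u)) = redA u"
  by (metis minus_minus redA_minus_redA redA_rot_rot)

text \<open>Since |A| is odd and (1 - i)(1 + i) = 2, multiplication by 2, 1 - i, 1 + i and i is
  injective on A.\<close>

lemma redA_eq_0_if_double: "redA (u + u) = 0 \<Longrightarrow> redA u = 0"
proof (cases u)
  case (fields x y z)
  assume "redA (u + u) = 0"
  then have "w dvd 2 * x" "w dvd 2 * y" "r dvd 2 * z"
    using fields by (simp_all add: redA_eq_0_iff del: redA.simps)
  then have "w dvd x" "w dvd y" "r dvd z"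
    using odd_w odd_r odd_dvd_double_imp_dvd by blast+
  then show ?thesis
    using fields by (simp add: redA_eq_0_iff del: redA.simps)
qed

lemma redA_eq_0_if_sub_rot: "redA (u - rot u) = 0 \<Longrightarrow> redA u = 0"
proof (cases u)
  case (fields x y z)
  assume "redA (u - rot u) = 0"
  then have x: "w dvd x + y" and y: "w dvd y - x" and z: "r dvd z - j * z"
    using fields by (simp_all add: redA_eq_0_iff del: redA.simps)
  have "w dvd 2 * y"
    using dvd_add[OF x y] by (simp add: algebra_simps)
  then have "w dvd y"
    using odd_w odd_dvd_double_imp_dvd by blast
  moreover have "w dvd x"
    using x \<open>w dvd y\<close> by (simp add: dvd_add_left_iff)
  moreover have "r dvd (1 + j) * (z - j * z) + (j * j + 1) * z"
    using z j_square by (simp add: cong_iff_dvd_diff power2_eq_square)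
  then have "r dvd 2 * z"
    by (simp add: algebra_simps)
  then have "r dvd z"
    using odd_r odd_dvd_double_imp_dvd by blast
  ultimately show ?thesis
    using fields by (simp add: redA_eq_0_iff del: redA.simps)
qed

lemma redA_eq_0_if_rot: "redA (rot u) = 0 \<Longrightarrow> redA u = 0"
  by (metis redA_minus_eq_0_iff redA_rot_redA redA_rot_rot redA_zero rot_zero)

lemma redA_eq_0_if_add_rot: "redA (u + rot u) = 0 \<Longrightarrow> redA u = 0"
  by (metis add.commute diff_minus_eq_add redA_diff_redA(2) redA_eq_0_if_rot redA_eq_0_if_sub_rot
      redA_rot_rot)

lemma redA_minus_eq_iff [simp]: "redA (- a) = redA (- b) \<longleftrightarrow> redA a = redA b"
  by (metis minus_minus redA_minus_redA)

definition orbit :: "int \<times> int \<times> int \<Rightarrow> (int \<times> int \<times> int) set" where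
  "orbit u = {redA u, redA (rot u), redA (- u), redA (- rot u)}"

lemma orbit_eq_image: "orbit u = redA ` {u, - u, rot u, - rot u}"
  by (simp add: orbit_def insert_commute)

lemma orbit_distinct:
  assumes "redA s \<noteq> 0"
  shows "distinct [redA s, redA (rot s), redA (- s), redA (- rot s)]"
proof -
  have "redA (s - rot s) \<noteq> 0" "redA (s + s) \<noteq> 0" "redA (s + rot s) \<noteq> 0"
    "redA (rot s + rot s) \<noteq> 0"
    using assms redA_eq_0_if_sub_rot redA_eq_0_if_double redA_eq_0_if_add_rot redA_eq_0_if_rot
    by blast+
  then have "redA s \<noteq> redA (rot s)" "redA s \<noteq> redA (- s)" "redA s \<noteq> redA (- rot s)"
    "redA (rot s) \<noteq> redA (- s)" "redA (rot s) \<noteq> redA (- rot s)"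
    by (simp_all only: redA_eq_iff diff_minus_eq_add add.commute[of "rot s" s]) simp_all
  then show ?thesis
    by simp
qed

lemma card_orbit: "redA s \<noteq> 0 \<Longrightarrow> card (orbit s) = 4"
  using orbit_distinct[of s] by (simp add: orbit_def)

definition residues_A :: "(int \<times> int \<times> int) set" where
  "residues_A = {u. redA u = u}"

lemma residues_A_eq: "residues_A = {0..<w} \<times> {0..<w} \<times> {0..<r}"
  using w_pos r_pos by (auto simp: residues_A_def zmod_trivial_iff)

lemma finite_residues_A: "finite residues_A"
  by (simp add: residues_A_eq)

lemma card_residues_A: "card residues_A = nat (w * w * r)"
  using w_pos r_pos by (simp add: residues_A_eq card_cartesian_product nat_mult_distrib)

lemma redA_in_residues_A [simp]: "redA u \<in> residues_A"
  by (simp add: residues_A_def)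

lemma orbit_redA [simp]: "orbit (redA u) = orbit u"
  by (simp add: orbit_def)

lemma orbit_subset: "orbit u \<subseteq> residues_A"
  by (simp add: orbit_def)

lemma finite_orbit: "finite (orbit u)"
  by (simp add: orbit_def)

lemma orbit_rot: "orbit (rot u) = orbit u"
  by (auto simp: orbit_def redA_rot_rot redA_minus_rot_rot)

lemma orbit_minus: "orbit (- u) = orbit u"
  by (auto simp: orbit_def)

lemma orbit_eq_if_mem:
  assumes "b \<in> orbit u"
  shows "orbit b = orbit u"
proof -
  consider "b = redA u" | "b = redA (rot u)" | "b = redA (- u)" | "b = redA (- rot u)"
    using assms by (auto simp: orbit_def)
  then show ?thesis
    by cases (simp_all add: orbit_rot orbit_minus)
qed

lemma zero_notin_orbit:
  assumes "redA u \<noteq> 0"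
  shows "0 \<notin> orbit u"
proof
  assume "0 \<in> orbit u"
  then have "orbit u = {0}"
    using orbit_eq_if_mem[of 0 u] by (simp add: orbit_def)
  then show False
    using assms by (simp add: orbit_def)
qed

text \<open>The lexicographic minimum picks one representative of each orbit in A - 0.\<close>

definition orbit_reps :: "(int \<times> int \<times> int) set" where
  "orbit_reps = {s \<in> residues_A. s \<noteq> 0 \<and> Min (orbit s) = s}"

lemma finite_orbit_reps: "finite orbit_reps"
  using finite_residues_A by (simp add: orbit_reps_def)

lemma orbit_rep_nonzero: "s \<in> orbit_reps \<Longrightarrow> redA s \<noteq> 0"
  by (simp add: orbit_reps_def residues_A_def)

lemma orbit_reps_eq_if_mem_orbit:
  assumes "s \<in> orbit_reps" "s' \<in> orbit_reps" "x \<in> orbit s" "x \<in> orbit s'"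
  shows "s = s'"
proof -
  have "orbit s = orbit s'"
    using assms(3,4) orbit_eq_if_mem by metis
  then show ?thesis
    using assms(1,2) unfolding orbit_reps_def by (metis (mono_tags, lifting) mem_Collect_eq)
qed

lemma mem_orbit_of_rep:
  assumes "u \<in> residues_A" "u \<noteq> 0"
  obtains s where "s \<in> orbit_reps" "u \<in> orbit s"
proof
  define s where "s = Min (orbit u)"
  have "s \<in> orbit u"
    unfolding s_def using finite_orbit by (rule Min_in) (simp add: orbit_def)
  then have orbit_s: "orbit s = orbit u"
    by (rule orbit_eq_if_mem)
  have "redA u \<noteq> 0" "u \<in> orbit u"
    using assms by (simp_all add: residues_A_def orbit_def)
  have "s \<in> residues_A"
    using \<open>s \<in> orbit u\<close> orbit_subset by blast
  moreover have "s \<noteq> 0"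
    using \<open>s \<in> orbit u\<close> zero_notin_orbit[OF \<open>redA u \<noteq> 0\<close>] by blast
  ultimately show "s \<in> orbit_reps"
    using orbit_s by (simp add: orbit_reps_def s_def)
  show "u \<in> orbit s"
    using orbit_s \<open>u \<in> orbit u\<close> by simp
qed

lemma residues_A_minus_zero_eq_UN_orbit: "residues_A - {0} = (\<Union>s\<in>orbit_reps. orbit s)"
proof
  show "residues_A - {0} \<subseteq> (\<Union>s\<in>orbit_reps. orbit s)"
  proof
    fix u
    assume "u \<in> residues_A - {0}"
    then obtain s where "s \<in> orbit_reps" "u \<in> orbit s"
      using mem_orbit_of_rep by blast
    then show "u \<in> (\<Union>s\<in>orbit_reps. orbit s)"
      by blast
  qed
  show "(\<Union>s\<in>orbit_reps. orbit s) \<subseteq> residues_A - {0}"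
  proof (rule UN_least)
    fix s
    assume "s \<in> orbit_reps"
    then show "orbit s \<subseteq> residues_A - {0}"
      using orbit_subset zero_notin_orbit[OF orbit_rep_nonzero] by blast
  qed
qed

lemma card_residues_A_orbit_reps: "card residues_A = 4 * card orbit_reps + 1"
proof -
  have "card (residues_A - {0}) = (\<Sum>s\<in>orbit_reps. card (orbit s))"
    unfolding residues_A_minus_zero_eq_UN_orbit
  proof (rule card_UN_disjoint)
    show "\<forall>s\<in>orbit_reps. \<forall>s'\<in>orbit_reps. s \<noteq> s' \<longrightarrow> orbit s \<inter> orbit s' = {}"
      using orbit_reps_eq_if_mem_orbit by blast
  qed (simp_all add: finite_orbit_reps finite_orbit)
  also have "\<dots> = 4 * card orbit_reps"
    using card_orbit orbit_rep_nonzero by simp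
  finally have "card (residues_A - {0}) = 4 * card orbit_reps" .
  moreover have "0 \<in> residues_A"
    by (metis redA_in_residues_A redA_zero)
  then have "card residues_A = card (residues_A - {0}) + 1"
    using card.remove[OF finite_residues_A] by simp
  ultimately show ?thesis
    by simp
qed

fun redG :: "int \<times> int \<times> int \<times> int \<Rightarrow> int \<times> int \<times> int \<times> int" where
  "redG (t, a) = (t mod 3, redA a)"

lemma redG_zero [simp]: "redG 0 = 0"
  by (simp add: zero_prod_def)

lemma redG_add_redG [simp]:
  "redG (redG g + h) = redG (g + h)" "redG (g + redG h) = redG (g + h)"
  by (cases g; cases h; simp add: mod_add_left_eq mod_add_right_eq)+

definition GA :: "(int \<times> int \<times> int \<times> int) monoid" where
  "GA = \<lparr>carrier = {g. redG g = g}, monoid.mult = \<lambda>g h. redG (g + h), one = 0\<rparr>"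

lemma carrier_GA: "carrier GA = {0..<3} \<times> residues_A"
  by (auto simp: GA_def residues_A_def zmod_trivial_iff)

lemma card_carrier_GA: "card (carrier GA) = 3 * card residues_A"
  by (simp add: carrier_GA card_cartesian_product)

lemma finite_carrier_GA: "finite (carrier GA)"
  by (simp add: carrier_GA finite_residues_A)

lemma redG_redG [simp]: "redG (redG g) = redG g"
  by (cases g) simp

lemma comm_group_GA: "comm_group GA"
proof (rule comm_groupI)
  fix x
  assume "x \<in> carrier GA"
  then show "\<one>\<^bsub>GA\<^esub> \<otimes>\<^bsub>GA\<^esub> x = x"
    by (simp add: GA_def)
  have "redG (- x) \<otimes>\<^bsub>GA\<^esub> x = \<one>\<^bsub>GA\<^esub>"
    by (simp add: GA_def)
  then show "\<exists>y\<in>carrier GA. y \<otimes>\<^bsub>GA\<^esub> x = \<one>\<^bsub>GA\<^esub>"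
    by (intro bexI[of _ "redG (- x)"]) (simp_all add: GA_def)
qed (simp_all add: GA_def add_ac)

interpretation GA: comm_group GA
  by (rule comm_group_GA)

lemma inv_GA: "x \<in> carrier GA \<Longrightarrow> inv\<^bsub>GA\<^esub> x = redG (- x)"
  by (rule GA.inv_equality) (simp_all add: GA_def)

lemma diff_GA: "x \<in> carrier GA \<Longrightarrow> y \<in> carrier GA \<Longrightarrow> x \<otimes>\<^bsub>GA\<^esub> inv\<^bsub>GA\<^esub> y = redG (x - y)"
  by (simp add: inv_GA) (simp add: GA_def)

definition HA :: "(int \<times> int \<times> int \<times> int) set" where
  "HA = {0..<3} \<times> {0}"

lemma card_HA: "card HA = 3"
  by (simp add: HA_def card_cartesian_product)

lemma HA_subset_carrier: "HA \<subseteq> carrier GA"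
  by (auto simp: HA_def carrier_GA residues_A_def)

lemma subgroup_HA: "subgroup HA GA"
proof (rule GA.subgroupI)
  show "HA \<subseteq> carrier GA"
    by (rule HA_subset_carrier)
  show "HA \<noteq> {}"
    by (simp add: HA_def)
next
  fix g h
  assume "g \<in> HA" "h \<in> HA"
  then obtain t t' where g: "g = (t, 0)" and h: "h = (t', 0)"
    by (auto simp: HA_def)
  have "g \<in> carrier GA"
    using \<open>g \<in> HA\<close> HA_subset_carrier by blast
  then show "inv\<^bsub>GA\<^esub> g \<in> HA"
    using g by (simp add: inv_GA HA_def)
  show "g \<otimes>\<^bsub>GA\<^esub> h \<in> HA"
    using g h by (simp add: GA_def HA_def)
qed

definition block :: "int \<times> int \<times> int \<Rightarrow> (int \<times> int \<times> int \<times> int) set" where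
  "block s = {(1, redA s), (2, redA (rot s)), (1, redA (- s)), (2, redA (- rot s))}"

lemma block_subset_carrier: "block s \<subseteq> carrier GA"
  by (simp add: block_def carrier_GA)

lemma finite_block: "finite (block s)"
  by (simp add: block_def)

lemma card_block: "redA s \<noteq> 0 \<Longrightarrow> card (block s) = 4"
  using orbit_distinct[of s] by (simp add: block_def)

lemma snd_block: "snd ` block s = orbit s"
  by (auto simp: block_def orbit_def)

lemma block_minus: "block (- s) = block s"
  by (auto simp: block_def)

lemma neg_block_block:
  "neg_block GA (block s) = {(2, redA (- s)), (1, redA (- rot s)), (2, redA s), (1, redA (rot s))}"
  using block_subset_carrier[of s] by (auto simp: neg_block_def block_def inv_GA)

lemma block_rot: "block (rot s) = neg_block GA (block s)"
  unfolding neg_block_block unfolding block_def by (auto simp: redA_rot_rot redA_minus_rot_rot)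

lemma snd_neg_block: "snd ` neg_block GA (block s) = orbit s"
  by (auto simp: neg_block_block orbit_def)

lemma block_Int_neg_block: "redA s \<noteq> 0 \<Longrightarrow> block s \<inter> neg_block GA (block s) = {}"
  unfolding neg_block_block using orbit_distinct[of s] by (auto simp: block_def)

lemma eq_if_snd_eq_block:
  assumes "redA s \<noteq> 0" "x \<in> block s" "y \<in> block s" "snd x = snd y"
  shows "x = y"
  using orbit_distinct[OF assms(1)] assms(2-4) by (auto simp: block_def)

text \<open>The differences at level t within block s have A-components diff_map t u, u in the
  orbit of s.\<close>

definition diff_map :: "int \<Rightarrow> int \<times> int \<times> int \<Rightarrow> int \<times> int \<times> int" where
  "diff_map t u = (if t = 0 then u + u else rot u - u)"

lemma redA_diff_map_redA [simp]: "redA (diff_map t (redA u)) = redA (diff_map t u)"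
  by (simp add: diff_map_def) (metis redA_diff_redA(1) redA_rot_redA)

lemma diff_pairs_block_diff_map:
  assumes "redA s \<noteq> 0" and "t \<in> {0..<3}"
  shows "diff_pairs GA (block s) (t, redA (diff_map t s)) \<noteq> {}"
proof -
  have pair: "(x, y) \<in> diff_pairs GA (block s) d"
    if "x \<in> block s" "y \<in> block s" "x \<noteq> y" "redG (x - y) = d" for x y d
  proof -
    have "x \<in> carrier GA" "y \<in> carrier GA"
      using that(1,2) block_subset_carrier by blast+
    then show ?thesis
      using that by (simp add: diff_pairs_def diff_GA)
  qed
  have neq: "redA s \<noteq> redA (- s)" "redA (rot s) \<noteq> redA s" "redA (- s) \<noteq> redA (- rot s)"
    using orbit_distinct[OF assms(1)] by auto
  have "((1, redA s), (1, redA (- s))) \<in> diff_pairs GA (block s) (0, redA (diff_map 0 s))"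
    by (rule pair) (simp_all add: block_def neq diff_map_def)
  moreover have "((2, redA (rot s)), (1, redA s)) \<in> diff_pairs GA (block s) (1, redA (diff_map 1 s))"
    by (rule pair) (simp_all add: block_def neq diff_map_def)
  moreover have "((1, redA (- s)), (2, redA (- rot s))) \<in> diff_pairs GA (block s) (2, redA (diff_map 2 s))"
    by (rule pair) (simp_all add: block_def neq diff_map_def algebra_simps)
  moreover have "t = 0 \<or> t = 1 \<or> t = 2"
    using assms(2) by (simp; presburger)
  ultimately show ?thesis
    by blast
qed

fun half :: "int \<times> int \<times> int \<Rightarrow> int \<times> int \<times> int" where
  "half (x, y, z) = ((w + 1) div 2 * x, (w + 1) div 2 * y, (r + 1) div 2 * z)"

lemma redA_half_double: "redA (half u + half u) = redA u"
proof -
  have "((m + 1) div 2 * x + (m + 1) div 2 * x) mod m = x mod m" if "odd m" for m x :: int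
  proof -
    obtain k where "m = 2 * k + 1"
      using \<open>odd m\<close> by (rule oddE)
    then have "(m + 1) div 2 * x + (m + 1) div 2 * x = x + m * x"
      by (simp add: algebra_simps)
    then show ?thesis
      by simp
  qed
  then show ?thesis
    using odd_w odd_r by (cases u) simp
qed

lemma diff_map_surj:
  assumes "a \<in> residues_A" "a \<noteq> 0"
  obtains u where "redA u \<noteq> 0" "redA (diff_map t u) = a"
proof -
  define h where "h = half a"
  \<comment> \<open>on A, the inverse of i - 1 is -(i + 1)/2\<close>
  define u where "u = (if t = 0 then h else - (rot h + h))"
  have "redA (diff_map t u) = redA (h + h)"
  proof (cases "t = 0")
    case False
    have "redA (diff_map t u) = redA (h - redA (rot (rot h)))"
      using False by (simp add: u_def diff_map_def algebra_simps)
    then show ?thesis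
      by (simp add: redA_rot_rot)
  qed (simp add: u_def diff_map_def)
  then have a: "redA (diff_map t u) = a"
    using assms(1) redA_half_double by (simp add: h_def residues_A_def)
  have "redA u \<noteq> 0"
  proof
    assume "redA u = 0"
    then have "redA (diff_map t u) = redA (diff_map t 0)"
      by (metis redA_diff_map_redA redA_zero)
    also have "redA (diff_map t 0) = 0"
      by (simp add: diff_map_def)
    finally show False
      using a assms(2) by simp
  qed
  then show ?thesis
    using a that by blast
qed

lemma diff_pairs_block_orbit:
  assumes "redA s \<noteq> 0" "redA u \<in> orbit s" "t \<in> {0..<3}"
  shows "diff_pairs GA (block s) (t, redA (diff_map t u)) \<noteq> {}"
proof -
  obtain v where v: "redA u = redA v" "v \<in> {s, - s, rot s, - rot s}"
    using assms(2) unfolding orbit_eq_image by (rule imageE)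
  have "redA u \<noteq> 0"
    using assms(2) zero_notin_orbit[OF assms(1)] by auto
  then have "diff_pairs GA (block v) (t, redA (diff_map t v)) \<noteq> {}"
    using v(1) diff_pairs_block_diff_map[OF _ assms(3)] by simp
  moreover have "redA (diff_map t v) = redA (diff_map t u)"
    using v(1) by (metis redA_diff_map_redA)
  ultimately obtain x y where xy: "(x, y) \<in> diff_pairs GA (block v) (t, redA (diff_map t u))"
    by auto
  consider "block v = block s" | "block v = neg_block GA (block s)"
    using v(2) by (auto simp: block_minus block_rot)
  then show ?thesis
  proof cases
    case 2
    then have "block s = neg_block GA (block v)"
      by (simp add: GA.neg_block_neg_block block_subset_carrier)
    then show ?thesis
      using GA.diff_pairs_neg_blockI[OF xy block_subset_carrier] by auto
  qed (use xy in auto)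
qed

lemma diff_pairs_cover:
  assumes "d \<in> carrier GA - HA"
  obtains s where "s \<in> orbit_reps" "diff_pairs GA (block s) d \<noteq> {}"
proof -
  obtain t a where d: "d = (t, a)" "t \<in> {0..<3}" "a \<in> residues_A" "a \<noteq> 0"
    using assms by (cases d) (auto simp: carrier_GA HA_def)
  obtain u where u: "redA u \<noteq> 0" "redA (diff_map t u) = a"
    using diff_map_surj[OF d(3,4)] .
  obtain s where s: "s \<in> orbit_reps" "redA u \<in> orbit s"
    using mem_orbit_of_rep[of "redA u"] u(1) by (auto simp: residues_A_def)
  then show ?thesis
    using diff_pairs_block_orbit[OF orbit_rep_nonzero s(2) d(2)] u(2) d(1) that by auto
qed

lemma snd_redG [simp]: "snd (redG g) = redA (snd g)"
  by (cases g) simp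

lemma diff_pairs_block_HA:
  assumes "redA s \<noteq> 0" and "d \<in> HA"
  shows "diff_pairs GA (block s) d = {}"
proof (rule equals0I)
  fix p
  assume "p \<in> diff_pairs GA (block s) d"
  then obtain x y where xy: "x \<in> block s" "y \<in> block s" "x \<noteq> y" "x \<otimes>\<^bsub>GA\<^esub> inv\<^bsub>GA\<^esub> y = d"
    unfolding diff_pairs_def by blast
  have "x \<in> carrier GA" "y \<in> carrier GA"
    using xy(1,2) block_subset_carrier by blast+
  then have "redA (snd x) = snd x" "redA (snd y) = snd y" "redG (x - y) = d"
    using xy(4) by (auto simp: carrier_GA residues_A_def diff_GA)
  moreover have "snd d = 0"
    using assms(2) by (auto simp: HA_def)
  ultimately have "snd x = snd y"
    using redA_eq_iff[of "snd x" "snd y"] by auto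
  then show False
    using eq_if_snd_eq_block[OF assms(1) xy(1,2)] xy(3) by blast
qed

lemma sum_card_diff_pairs_blocks:
  assumes "d \<in> carrier GA - HA"
  shows "(\<Sum>s\<in>orbit_reps. card (diff_pairs GA (block s) d)) = 1"
proof -
  define f where "f d = (\<Sum>s\<in>orbit_reps. card (diff_pairs GA (block s) d))" for d
  have "sum f (carrier GA) = (\<Sum>s\<in>orbit_reps. \<Sum>d\<in>carrier GA. card (diff_pairs GA (block s) d))"
    unfolding f_def by (rule sum.swap)
  also have "\<dots> = (\<Sum>s\<in>orbit_reps. 12)"
    using GA.sum_card_diff_pairs[OF finite_carrier_GA block_subset_carrier] card_block orbit_rep_nonzero
    by simp
  finally have "sum f (carrier GA) = 12 * card orbit_reps"
    by simp
  moreover have "sum f HA = 0"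
    using diff_pairs_block_HA orbit_rep_nonzero by (simp add: f_def)
  ultimately have "sum f (carrier GA - HA) = 12 * card orbit_reps"
    using sum.subset_diff[OF HA_subset_carrier finite_carrier_GA, of f] by simp
  moreover have "card (carrier GA - HA) = 12 * card orbit_reps"
    using HA_subset_carrier finite_carrier_GA
    by (simp add: card_Diff_subset finite_subset card_HA card_carrier_GA card_residues_A_orbit_reps)
  moreover have "f d \<ge> 1" if d: "d \<in> carrier GA - HA" for d
  proof -
    obtain s where s: "s \<in> orbit_reps" "diff_pairs GA (block s) d \<noteq> {}"
      using diff_pairs_cover[OF d] .
    then have "1 \<le> card (diff_pairs GA (block s) d)"
      by (simp add: Suc_le_eq card_gt_0_iff finite_diff_pairs finite_block)
    also have "\<dots> \<le> f d"
      unfolding f_def by (rule member_le_sum[OF s(1)]) (simp_all add: finite_orbit_reps)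
    finally show ?thesis .
  qed
  ultimately show ?thesis
    using all_eq_1_if_sum_eq_card[of "carrier GA - HA" f] finite_carrier_GA assms
    by (simp add: f_def)
qed

fun signed_block :: "(int \<times> int \<times> int) \<times> bool \<Rightarrow> (int \<times> int \<times> int \<times> int) set" where
  "signed_block (s, neg) = (if neg then neg_block GA (block s) else block s)"

lemma signed_blocks_disjoint:
  assumes "s \<in> orbit_reps" "s' \<in> orbit_reps" "(s, b) \<noteq> (s', b')"
  shows "signed_block (s, b) \<inter> signed_block (s', b') = {}"
proof (cases "s = s'")
  case True
  then show ?thesis
    using assms block_Int_neg_block[OF orbit_rep_nonzero[OF assms(1)]]
    by (cases b; cases b') (auto simp: Int_commute)
next
  case False
  have "snd ` signed_block (s, b) = orbit s" "snd ` signed_block (s', b') = orbit s'"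
    by (simp_all add: snd_block snd_neg_block)
  then show ?thesis
    using orbit_reps_eq_if_mem_orbit[OF assms(1,2)] False by blast
qed

lemma block_Int_HA: "redA s \<noteq> 0 \<Longrightarrow> block s \<inter> HA = {}"
  using snd_block[of s] zero_notin_orbit[of s] by (force simp: HA_def)

lemma blocks_and_negatives_disjoint:
  assumes "distinct xs" and "set xs \<subseteq> orbit_reps"
  defines "L \<equiv> map block xs @ map (neg_block GA) (map block xs)"
  shows "\<forall>i<length L. \<forall>j<length L. i \<noteq> j \<longrightarrow> L ! i \<inter> L ! j = {}"
proof -
  define zs where "zs = map (\<lambda>s. (s, False)) xs @ map (\<lambda>s. (s, True)) xs"
  have L: "L = map signed_block zs"
    by (simp add: L_def zs_def comp_def)
  have "distinct zs"
    using assms(1) by (auto simp: zs_def distinct_map inj_on_def)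
  moreover have "fst ` set zs \<subseteq> orbit_reps"
    using assms(2) by (simp add: zs_def image_Un image_image)
  then have "signed_block p \<inter> signed_block q = {}" if "p \<in> set zs" "q \<in> set zs" "p \<noteq> q" for p q
    using signed_blocks_disjoint[of "fst p" "fst q" "snd p" "snd q"] that by auto
  ultimately show ?thesis
    unfolding L using map_nth_disjoint[of zs signed_block] by auto
qed

lemma is_BRDF_GA:
  obtains Bs where "is_BRDF GA HA 4 1 Bs"
proof -
  obtain xs where xs: "distinct xs" "set xs = orbit_reps"
    using finite_distinct_list[OF finite_orbit_reps] by blast
  have diff_count: "diff_count GA (map block xs) d = (\<Sum>s\<in>orbit_reps. card (diff_pairs GA (block s) d))"
    for d
    using xs sum_list_distinct_conv_sum_set[OF xs(1)]
    by (simp add: diff_count_eq_sum_card_diff_pairs comp_def)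
  have "is_RDF GA HA 4 1 (map block xs)"
    unfolding is_RDF_def using xs diff_count sum_card_diff_pairs_blocks diff_pairs_block_HA
      block_subset_carrier finite_block card_block orbit_rep_nonzero
    by auto
  moreover have "\<forall>B\<in>set (map block xs). B \<inter> HA = {}"
    using xs(2) block_Int_HA orbit_rep_nonzero by auto
  ultimately have "is_BRDF GA HA 4 1 (map block xs)"
    using blocks_and_negatives_disjoint[OF xs(1)] xs(2) by (simp add: is_BRDF_def)
  then show ?thesis
    by (rule that)
qed

end

theorem mainTheorem7:
  fixes v :: nat
  assumes "v > 0"
    and "\<forall>p. Factorial_Ring.prime p \<and> p dvd v \<longrightarrow> p ^ Factorial_Ring.multiplicity p v mod 4 = 1"
  shows "exists_BRDF (3 * v) 3 4 1"
proof -
  obtain w r where v: "v = w\<^sup>2 * r" "odd w" "odd r" "QuadRes (int r) (-1)"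
    using square_times_QuadRes_decomposition[OF assms] .
  then obtain j where j: "[j\<^sup>2 = -1] (mod int r)"
    by (auto simp: QuadRes_def)
  interpret brdf_construction "int w" "int r" j
    using v(2,3) j by unfold_locales (auto intro: odd_pos)
  obtain Bs where "is_BRDF GA HA 4 1 Bs"
    by (rule is_BRDF_GA)
  then have "exists_BRDF (card (carrier GA)) (card HA) 4 1"
    using comm_group_GA finite_carrier_GA subgroup_HA
    by (intro exists_BRDF_if_is_BRDF) (simp_all add: comm_group.axioms(2))
  moreover have "card (carrier GA) = 3 * v"
    using v(1) by (simp add: card_carrier_GA card_residues_A power2_eq_square nat_mult_distrib)
  ultimately show ?thesis
    by (simp add: card_HA)
qed

end
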